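(* Let $k$ be a field, let $K$ be a simplicial complex with vertex set $V=\{x_1,\dots,x_n\}$, let $R=k[x_1,\dots,x_n]$, and let $I=I(K)$ be the Stanley–Reisner ideal of $K$. If $I$ is generated by $n-t$ elements, then $\widetilde{H}_i(\Delta(R/I);k)=0$ for all $0\leq i\leq t-2$.
   Context: The Stanley–Reisner ideal $I(K)$ is the ideal of $R$ generated by the squarefree monomials $x_{j_1}\cdots x_{j_r}$ such that $\{x_{j_1},\dots,x_{j_r}\}$ is not a face of $K$. $R/I$ is graded with $\mathfrak m$ the ideal of elements of positive degree. For such a graded ring with minimal primes $\mathfrak p_1,\dots,\mathfrak p_m$, $\Delta(R/I)$ is the simplicial complex on $\{1,\dots,m\}$ in which $\{i_0,\dots,i_s\}$ is a face if and only if $\sqrt{\mathfrak p_{i_0}+\cdots+\mathfrak p_{i_s}}\neq\mathfrak m$. $\widetilde{H}_i(-;k)$ is reduced homology with coefficients in $k$. *)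

theory Defs
  imports "HOL-Library.Poly_Mapping" "HOL-Library.Cardinality"
begin

type_synonym ('n, 'k) mpoly = "('n \<Rightarrow>\<^sub>0 nat) \<Rightarrow>\<^sub>0 'k"

definition pvar :: "'n \<Rightarrow> ('n, 'k::comm_ring_1) mpoly" where
  "pvar v = Poly_Mapping.single (Poly_Mapping.single v 1) 1"

definition is_ideal :: "'a::comm_ring_1 set \<Rightarrow> bool" where
  "is_ideal J \<longleftrightarrow> 0 \<in> J \<and> (\<forall>a\<in>J. \<forall>b\<in>J. a + b \<in> J) \<and> (\<forall>r. \<forall>a\<in>J. r * a \<in> J)"

definition ideal_gen :: "'a::comm_ring_1 set \<Rightarrow> 'a set" where
  "ideal_gen S = \<Inter>{J. is_ideal J \<and> S \<subseteq> J}"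

definition is_prime_ideal :: "'a::comm_ring_1 set \<Rightarrow> bool" where
  "is_prime_ideal P \<longleftrightarrow> is_ideal P \<and> P \<noteq> UNIV \<and> (\<forall>a b. a * b \<in> P \<longrightarrow> a \<in> P \<or> b \<in> P)"

definition radical :: "'a::comm_ring_1 set \<Rightarrow> 'a set" where
  "radical J = {f. \<exists>m. f ^ m \<in> J}"

text \<open>Minimal primes of R/I, identified with the primes of R minimal over I.\<close>
definition minimal_primes :: "'a::comm_ring_1 set \<Rightarrow> 'a set set" where
  "minimal_primes I = {P. is_prime_ideal P \<and> I \<subseteq> P \<and>
       (\<forall>Q. is_prime_ideal Q \<and> I \<subseteq> Q \<and> Q \<subseteq> P \<longrightarrow> Q = P)}"

text \<open>The homogeneous maximal ideal (elements of positive degree, i.e. zero constant term).\<close>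
definition irrelevant_ideal :: "('n, 'k::comm_ring_1) mpoly set" where
  "irrelevant_ideal = {f. Poly_Mapping.lookup f 0 = 0}"

definition simplicial_complex_on :: "'n set set \<Rightarrow> 'n set \<Rightarrow> bool" where
  "simplicial_complex_on K V \<longleftrightarrow> (\<forall>F\<in>K. F \<subseteq> V) \<and> (\<forall>F\<in>K. \<forall>G. G \<subseteq> F \<longrightarrow> G \<in> K)
      \<and> (\<forall>v\<in>V. {v} \<in> K)"

definition stanley_reisner_ideal :: "'n::finite set set \<Rightarrow> ('n, 'k::comm_ring_1) mpoly set" where
  "stanley_reisner_ideal K = ideal_gen {(\<Prod>v\<in>F. pvar v) | F. F \<notin> K}"

text \<open>Given an enumeration p_0,...,p_(m-1) of the minimal primes, the simplicial
  complex on {0..<m}: a nonempty set F is a face iff the radical of the sum of the p_i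
  (i in F) is not the irrelevant ideal; the empty face is included.\<close>
definition Delta_complex :: "nat \<Rightarrow> (nat \<Rightarrow> ('n, 'k::comm_ring_1) mpoly set) \<Rightarrow> nat set set" where
  "Delta_complex m p = {F. F \<subseteq> {..<m} \<and>
       (F = {} \<or> radical (ideal_gen (\<Union>i\<in>F. p i)) \<noteq> irrelevant_ideal)}"

text \<open>Chains of cardinality-j faces (i.e. (j-1)-chains), with the empty face in cardinality 0
  giving the augmentation.\<close>
definition chains :: "nat set set \<Rightarrow> nat \<Rightarrow> (nat set \<Rightarrow> 'k::field) set" where
  "chains K j = {c. \<forall>\<sigma>. c \<sigma> \<noteq> 0 \<longrightarrow> \<sigma> \<in> K \<and> card \<sigma> = j}"

definition boundary :: "nat set set \<Rightarrow> (nat set \<Rightarrow> 'k::field) \<Rightarrow> nat set \<Rightarrow> 'k" where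
  "boundary K c \<sigma> = (if \<sigma> \<in> K then
      (\<Sum>v \<in> \<Union>K - \<sigma>. (-1) ^ card {w\<in>\<sigma>. w < v} * c (insert v \<sigma>)) else 0)"

definition reduced_homology_vanishes :: "'k::field itself \<Rightarrow> nat set set \<Rightarrow> nat \<Rightarrow> bool" where
  "reduced_homology_vanishes _ K i \<longleftrightarrow>
     (\<forall>c :: nat set \<Rightarrow> 'k. c \<in> chains K (i + 1) \<and> boundary K c = (\<lambda>_. 0) \<longrightarrow>
        (\<exists>b \<in> chains K (i + 2). boundary K b = c))"

end

(*
  The minimal primes of k[x]/I(K) are the ideals (x_v : v \<notin> F) for the facets F of K, and a
  family of them sums to an ideal with radical different from the irrelevant ideal iff the facets
  share a vertex; so \<Delta>(R/I) is the nerve of the cover of K by its facets.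

  If a complex on n vertices generated by a cover has s minimal nonfaces, the nerve of the cover
  has vanishing reduced homology in degrees \<le> n - s - 2: delete a vertex v of a minimal nonface;
  the nerve splits into the nerve for the deletion (fewer minimal nonfaces) and a simplex, meeting
  in the nerve for the link of v, and Mayer-Vietoris closes the induction on n.

  Finally s \<le> n - t: for a minimal nonface N, the coefficient of x^N is linear over the
  constants on I; these s coefficients map I into k^s with image spanned by the images of the
  n - t generators and containing every unit vector (the image of x^N).
*)

theory Submission
  imports Defs "HOL-Library.Function_Algebras" "HOL.Vector_Spaces"
begin

section \<open>Simplicial chains\<close>

definition face_sign :: "nat set \<Rightarrow> nat \<Rightarrow> 'k::field" where
  "face_sign \<sigma> v = (-1) ^ card {w\<in>\<sigma>. w < v}"

definition finite_complex :: "nat set set \<Rightarrow> bool" where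
  "finite_complex L \<longleftrightarrow> {} \<in> L \<and> finite (\<Union>L) \<and> (\<forall>F\<in>L. \<forall>G. G \<subseteq> F \<longrightarrow> G \<in> L)"

text \<open>Vanishing of reduced homology in the degree of the faces with \<open>j\<close> vertices, i.e.\
  \<open>reduced_homology_vanishes TYPE('k) L i\<close> for \<open>j = i + 1\<close>; the case \<open>j = 0\<close> (degree \<open>-1\<close>,
  nonemptiness of \<open>L\<close>) is needed as the base of Mayer--Vietoris.\<close>
definition cycles_are_boundaries :: "'k::field itself \<Rightarrow> nat set set \<Rightarrow> nat \<Rightarrow> bool" where
  "cycles_are_boundaries _ L j \<longleftrightarrow> (\<forall>c :: nat set \<Rightarrow> 'k. c \<in> chains L j \<and> boundary L c = (\<lambda>_. 0) \<longrightarrow>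
        (\<exists>b \<in> chains L (Suc j). boundary L b = c))"

lemma boundary_face_sign:
  "boundary L c \<sigma> = (if \<sigma> \<in> L then (\<Sum>v \<in> \<Union>L - \<sigma>. face_sign \<sigma> v * c (insert v \<sigma>)) else 0)"
  by (simp add: boundary_def face_sign_def)

lemma face_sign_mult_self [simp]: "face_sign \<sigma> v * face_sign \<sigma> v = (1::'k::field)"
  by (simp add: face_sign_def power_mult_distrib[symmetric] flip: power_add)

lemma face_sign_insert:
  assumes "finite \<sigma>" "a \<notin> \<sigma>" "a \<noteq> v"
  shows "face_sign (insert a \<sigma>) v = (if a < v then - face_sign \<sigma> v else (face_sign \<sigma> v :: 'k::field))"
proof -
  have "{w\<in>insert a \<sigma>. w < v} = (if a < v then insert a {w\<in>\<sigma>. w < v} else {w\<in>\<sigma>. w < v})"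
    by auto
  then show ?thesis using assms by (auto simp: face_sign_def)
qed

lemma finite_complex_finite_face: "finite_complex L \<Longrightarrow> \<sigma> \<in> L \<Longrightarrow> finite \<sigma>"
  unfolding finite_complex_def by (meson Union_upper finite_subset)

lemma finite_complex_Un: "finite_complex L1 \<Longrightarrow> finite_complex L2 \<Longrightarrow> finite_complex (L1 \<union> L2)"
  by (auto simp: finite_complex_def)

lemma finite_complex_Int: "finite_complex L1 \<Longrightarrow> finite_complex L2 \<Longrightarrow> finite_complex (L1 \<inter> L2)"
  unfolding finite_complex_def by (auto intro: finite_subset[of "\<Union>(L1 \<inter> L2)" "\<Union>L1"])

lemma finite_complex_Pow: "finite A \<Longrightarrow> finite_complex (Pow A)"
  unfolding finite_complex_def by auto

lemma chains_mono: "c \<in> chains L' j \<Longrightarrow> L' \<subseteq> L \<Longrightarrow> c \<in> chains L j"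
  by (auto simp: chains_def)

lemma chains_add: "c1 \<in> chains L j \<Longrightarrow> c2 \<in> chains L j \<Longrightarrow> (\<lambda>\<sigma>. c1 \<sigma> + c2 \<sigma>) \<in> chains L j"
  unfolding chains_def by (smt (verit) add_0 mem_Collect_eq)

lemma chains_diff: "c1 \<in> chains L j \<Longrightarrow> c2 \<in> chains L j \<Longrightarrow> (\<lambda>\<sigma>. c1 \<sigma> - c2 \<sigma>) \<in> chains L j"
  unfolding chains_def by (smt (verit) diff_0_right diff_self mem_Collect_eq)

lemma boundary_add: "boundary L (\<lambda>\<sigma>. c1 \<sigma> + c2 \<sigma>) = (\<lambda>\<sigma>. boundary L c1 \<sigma> + boundary L c2 \<sigma>)"
  by (auto simp: boundary_face_sign fun_eq_iff distrib_left sum.distrib)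

lemma boundary_diff: "boundary L (\<lambda>\<sigma>. c1 \<sigma> - c2 \<sigma>) = (\<lambda>\<sigma>. boundary L c1 \<sigma> - boundary L c2 \<sigma>)"
  by (auto simp: boundary_face_sign fun_eq_iff right_diff_distrib sum_subtractf)

lemma boundary_zero_outside:
  assumes "finite_complex L" "\<forall>\<sigma>. c \<sigma> \<noteq> 0 \<longrightarrow> \<sigma> \<in> L" "\<sigma> \<notin> L"
  shows "c (insert v \<sigma>) = 0"
  using assms unfolding finite_complex_def by (metis subset_insertI)

lemma boundary_subcomplex:
  assumes L: "finite_complex L" and L': "finite_complex L'" and "L' \<subseteq> L" and c: "c \<in> chains L' j"
  shows "boundary L' c = boundary L c"
proof
  fix \<sigma>
  have supp: "\<forall>\<sigma>. c \<sigma> \<noteq> 0 \<longrightarrow> \<sigma> \<in> L'" using c by (auto simp: chains_def)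
  show "boundary L' c \<sigma> = boundary L c \<sigma>"
  proof (cases "\<sigma> \<in> L'")
    case True
    have "(\<Sum>v \<in> \<Union>L' - \<sigma>. face_sign \<sigma> v * c (insert v \<sigma>)) = (\<Sum>v \<in> \<Union>L - \<sigma>. face_sign \<sigma> v * c (insert v \<sigma>))"
      by (rule sum.mono_neutral_left) (use L \<open>L' \<subseteq> L\<close> supp in \<open>auto simp: finite_complex_def\<close>)
    then show ?thesis using True \<open>L' \<subseteq> L\<close> by (auto simp: boundary_face_sign)
  next
    case False
    then show ?thesis using boundary_zero_outside[OF L' supp] by (simp add: boundary_face_sign)
  qed
qed

lemma boundary_in_chains:
  assumes L: "finite_complex L" and c: "c \<in> chains L (Suc j)"
  shows "boundary L c \<in> chains L j"
  unfolding chains_def mem_Collect_eq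
proof (intro allI impI)
  fix \<sigma> assume ne: "boundary L c \<sigma> \<noteq> 0"
  then have s: "\<sigma> \<in> L" by (auto simp: boundary_face_sign split: if_splits)
  with ne obtain v where v: "v \<in> \<Union>L - \<sigma>" "c (insert v \<sigma>) \<noteq> 0"
    by (metis (no_types, lifting) boundary_face_sign mult_zero_right sum.neutral)
  then have "card (insert v \<sigma>) = Suc j" using c by (auto simp: chains_def)
  then show "\<sigma> \<in> L \<and> card \<sigma> = j" using v s finite_complex_finite_face[OF L s] by auto
qed

lemma sum_pairs_antisym_eq_zero:
  fixes g :: "nat \<Rightarrow> nat \<Rightarrow> 'k::comm_ring_1"
  assumes fin: "finite D" and sym: "\<And>u w. g u w = g w u"
  shows "(\<Sum>u\<in>D. \<Sum>w\<in>D - {u}. (if u < w then - g u w else g u w)) = 0"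
proof -
  let ?f = "\<lambda>u w. (if u < w then - g u w else g u w)"
  define P where "P = Sigma D (\<lambda>u. D - {u})"
  define P1 where "P1 = {p\<in>P. fst p < snd p}"
  have finP: "finite P" using fin by (auto simp: P_def)
  have "(\<Sum>u\<in>D. \<Sum>w\<in>D - {u}. ?f u w) = (\<Sum>p\<in>P. ?f (fst p) (snd p))"
    unfolding P_def by (subst sum.Sigma) (use fin in \<open>auto simp: split_def\<close>)
  also have "P = P1 \<union> prod.swap ` P1" by (auto simp: P_def P1_def image_iff)
  also have "(\<Sum>p\<in>P1 \<union> prod.swap ` P1. ?f (fst p) (snd p))
      = (\<Sum>p\<in>P1. ?f (fst p) (snd p)) + (\<Sum>p\<in>prod.swap ` P1. ?f (fst p) (snd p))"
    by (rule sum.union_disjoint) (use finP in \<open>auto simp: P1_def\<close>)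
  also have "(\<Sum>p\<in>prod.swap ` P1. ?f (fst p) (snd p)) = (\<Sum>p\<in>P1. g (fst p) (snd p))"
    by (subst sum.reindex) (auto simp: inj_on_def P1_def sym intro!: sum.cong)
  also have "(\<Sum>p\<in>P1. ?f (fst p) (snd p)) = (\<Sum>p\<in>P1. - g (fst p) (snd p))"
    by (rule sum.cong) (auto simp: P1_def)
  finally show ?thesis by (simp add: sum_negf)
qed

text \<open>Each \<open>(dim - 2)\<close>-face \<open>\<sigma>\<close> receives \<open>c (\<sigma> \<union> {u, w})\<close> twice, via \<open>u\<close> and via \<open>w\<close>,
  with opposite signs.\<close>
lemma boundary_boundary:
  assumes L: "finite_complex L" and c: "\<forall>\<sigma>. c \<sigma> \<noteq> 0 \<longrightarrow> \<sigma> \<in> L"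
  shows "boundary L (boundary L c) = (\<lambda>_. (0::'k::field))"
proof
  fix \<sigma>
  show "boundary L (boundary L c) \<sigma> = 0"
  proof (cases "\<sigma> \<in> L")
    case False then show ?thesis by (simp add: boundary_face_sign)
  next
    case True
    define D where "D = \<Union>L - \<sigma>"
    have fD: "finite D" using L by (auto simp: finite_complex_def D_def)
    define g where "g u w = face_sign \<sigma> u * face_sign \<sigma> w * c (insert w (insert u \<sigma>))" for u w
    have g_sym: "g u w = g w u" for u w by (simp add: g_def insert_commute mult.commute)
    have inner: "face_sign \<sigma> u * boundary L c (insert u \<sigma>)
        = (\<Sum>w\<in>D - {u}. (if u < w then - g u w else g u w))" if u: "u \<in> D" for u
    proof -
      have "\<Union>L - insert u \<sigma> = D - {u}" by (auto simp: D_def)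
      then have "boundary L c (insert u \<sigma>)
          = (\<Sum>w\<in>D - {u}. face_sign (insert u \<sigma>) w * c (insert w (insert u \<sigma>)))"
        using boundary_zero_outside[OF L c] by (simp add: boundary_face_sign)
      moreover have "face_sign \<sigma> u * (face_sign (insert u \<sigma>) w * c (insert w (insert u \<sigma>)))
          = (if u < w then - g u w else g u w)" if "w \<in> D - {u}" for w
        using face_sign_insert[OF finite_complex_finite_face[OF L True], of u w] u that
        by (auto simp: g_def D_def)
      ultimately show ?thesis by (simp add: sum_distrib_left)
    qed
    have "boundary L (boundary L c) \<sigma> = (\<Sum>u\<in>D. face_sign \<sigma> u * boundary L c (insert u \<sigma>))"
      using True by (simp add: boundary_face_sign D_def)
    also have "\<dots> = (\<Sum>u\<in>D. \<Sum>w\<in>D - {u}. (if u < w then - g u w else g u w))"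
      by (rule sum.cong) (simp_all add: inner)
    also have "\<dots> = 0" by (rule sum_pairs_antisym_eq_zero[OF fD g_sym])
    finally show ?thesis .
  qed
qed


definition cone_chain :: "nat \<Rightarrow> (nat set \<Rightarrow> 'k::field) \<Rightarrow> nat set \<Rightarrow> 'k" where
  "cone_chain a z \<tau> = (if a \<in> \<tau> then face_sign (\<tau> - {a}) a * z (\<tau> - {a}) else 0)"

lemma cone_chain_in_chains:
  assumes L: "finite_complex L" and apex: "\<forall>S\<in>L. insert a S \<in> L" and z: "z \<in> chains L j"
  shows "cone_chain a z \<in> chains L (Suc j)"
  unfolding chains_def mem_Collect_eq
proof (intro allI impI)
  fix \<tau> assume "cone_chain a z \<tau> \<noteq> 0"
  then have a: "a \<in> \<tau>" and "z (\<tau> - {a}) \<noteq> 0" by (auto simp: cone_chain_def split: if_splits)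
  then have \<tau>: "\<tau> - {a} \<in> L" "card (\<tau> - {a}) = j" using z by (auto simp: chains_def)
  have "\<tau> = insert a (\<tau> - {a})" using a by auto
  then show "\<tau> \<in> L \<and> card \<tau> = Suc j"
    using \<tau> apex finite_complex_finite_face[OF L \<tau>(1)] by (metis card_insert_disjoint Diff_iff singletonI)
qed

lemma boundary_cone_chain_through_apex:
  assumes L: "finite_complex L" and aU: "a \<in> \<Union>L" and \<rho>: "\<rho> \<in> L" "a \<notin> \<rho>"
    and cyc: "boundary L z \<rho> = 0"
  shows "(\<Sum>v \<in> \<Union>L - insert a \<rho>. face_sign (insert a \<rho>) v * cone_chain a z (insert v (insert a \<rho>)))
      = (z (insert a \<rho>) :: 'k::field)"
proof -
  let ?\<sigma> = "insert a \<rho>" and ?D = "\<Union>L - insert a \<rho>"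
  have fU: "finite (\<Union>L)" using L by (simp add: finite_complex_def)
  have f\<rho>: "finite \<rho>" using finite_complex_finite_face[OF L \<rho>(1)] .
  have D: "\<Union>L - \<rho> = insert a ?D" "a \<notin> ?D" using aU \<rho>(2) by auto
  have "boundary L z \<rho> = (\<Sum>v \<in> insert a ?D. face_sign \<rho> v * z (insert v \<rho>))"
    using \<rho>(1) by (simp only: boundary_face_sign D(1) if_True)
  also have "\<dots> = face_sign \<rho> a * z ?\<sigma> + (\<Sum>v \<in> ?D. face_sign \<rho> v * z (insert v \<rho>))"
    by (rule sum.insert) (use fU D(2) in auto)
  finally have S: "(\<Sum>v \<in> ?D. face_sign \<rho> v * z (insert v \<rho>)) = - (face_sign \<rho> a * z ?\<sigma>)"
    using cyc by (simp add: eq_neg_iff_add_eq_0 add.commute)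
  have "face_sign ?\<sigma> v * cone_chain a z (insert v ?\<sigma>) = - face_sign \<rho> a * (face_sign \<rho> v * z (insert v \<rho>))"
    if v: "v \<in> ?D" for v
  proof -
    have va: "v \<noteq> a" "v \<notin> \<rho>" using v by auto
    then have "insert v ?\<sigma> - {a} = insert v \<rho>" using \<rho>(2) by auto
    then have "cone_chain a z (insert v ?\<sigma>) = face_sign (insert v \<rho>) a * z (insert v \<rho>)"
      by (simp add: cone_chain_def)
    moreover have "face_sign ?\<sigma> v = (if a < v then - face_sign \<rho> v else (face_sign \<rho> v :: 'k))"
      by (rule face_sign_insert[OF f\<rho> \<rho>(2)]) (use va in auto)
    moreover have "face_sign (insert v \<rho>) a = (if v < a then - face_sign \<rho> a else (face_sign \<rho> a :: 'k))"
      by (rule face_sign_insert[OF f\<rho> va(2)]) (use va in auto)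
    ultimately show ?thesis
      using va(1) by (cases "a < v"; cases "v < a") (simp_all add: algebra_simps)
  qed
  then have "(\<Sum>v \<in> ?D. face_sign ?\<sigma> v * cone_chain a z (insert v ?\<sigma>))
      = - face_sign \<rho> a * (\<Sum>v \<in> ?D. face_sign \<rho> v * z (insert v \<rho>))"
    by (simp add: sum_distrib_left)
  also have "\<dots> = z ?\<sigma>" by (simp add: S mult.assoc[symmetric])
  finally show ?thesis .
qed

lemma boundary_cone_chain:
  assumes L: "finite_complex L" and apex: "\<forall>S\<in>L. insert a S \<in> L"
    and z: "z \<in> chains L j" and cyc: "boundary L z = (\<lambda>_. 0)"
  shows "boundary L (cone_chain a z) = z"
proof
  fix \<sigma>
  have aU: "a \<in> \<Union>L" using apex L by (force simp: finite_complex_def)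
  show "boundary L (cone_chain a z) \<sigma> = z \<sigma>"
  proof (cases "\<sigma> \<in> L")
    case False
    then have "z \<sigma> = 0" using z by (auto simp: chains_def)
    then show ?thesis using False by (simp add: boundary_face_sign)
  next
    case \<sigma>: True
    show ?thesis
    proof (cases "a \<in> \<sigma>")
      case False
      have "(\<Sum>v \<in> \<Union>L - \<sigma>. face_sign \<sigma> v * cone_chain a z (insert v \<sigma>))
          = face_sign \<sigma> a * cone_chain a z (insert a \<sigma>)"
        by (rule sum.remove[THEN trans]) (use L aU False in \<open>auto simp: finite_complex_def cone_chain_def\<close>)
      also have "\<dots> = z \<sigma>" using False by (simp add: cone_chain_def mult.assoc[symmetric])
      finally show ?thesis using \<sigma> by (simp add: boundary_face_sign)
    next
      case True
      then have "\<sigma> = insert a (\<sigma> - {a})" by auto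
      moreover have "\<sigma> - {a} \<in> L" using \<sigma> L by (auto simp: finite_complex_def)
      ultimately show ?thesis
        using boundary_cone_chain_through_apex[OF L aU, of "\<sigma> - {a}" z] \<sigma> cyc
        by (simp add: boundary_face_sign)
    qed
  qed
qed

lemma cycles_are_boundaries_cone:
  assumes "finite_complex L" and "\<forall>S\<in>L. insert a S \<in> L"
  shows "cycles_are_boundaries TYPE('k::field) L j"
  unfolding cycles_are_boundaries_def
proof (intro allI impI)
  fix z :: "nat set \<Rightarrow> 'k" assume "z \<in> chains L j \<and> boundary L z = (\<lambda>_. 0)"
  then have z: "z \<in> chains L j" "boundary L z = (\<lambda>_. 0)" by auto
  show "\<exists>b\<in>chains L (Suc j). boundary L b = z"
    using cone_chain_in_chains[OF assms z(1)] boundary_cone_chain[OF assms z] by blast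
qed

lemma cycles_are_boundaries_Un_0:
  assumes L1: "finite_complex L1" and L2: "finite_complex L2"
    and h2: "cycles_are_boundaries TYPE('k::field) L2 0"
  shows "cycles_are_boundaries TYPE('k) (L1 \<union> L2) 0"
  unfolding cycles_are_boundaries_def
proof (intro allI impI)
  fix z :: "nat set \<Rightarrow> 'k" assume "z \<in> chains (L1 \<union> L2) 0 \<and> boundary (L1 \<union> L2) z = (\<lambda>_. 0)"
  then have z: "z \<in> chains (L1 \<union> L2) 0" and cyc: "boundary (L1 \<union> L2) z = (\<lambda>_. 0)" by auto
  have L: "finite_complex (L1 \<union> L2)" using L1 L2 by (rule finite_complex_Un)
  have "\<sigma> = {}" if "z \<sigma> \<noteq> 0" for \<sigma>
  proof -
    have "\<sigma> \<in> L1 \<union> L2" "card \<sigma> = 0" using z that by (auto simp: chains_def)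
    then show ?thesis using finite_complex_finite_face[OF L] by simp
  qed
  then have z2: "z \<in> chains L2 0"
    using L2 by (fastforce simp: chains_def finite_complex_def)
  then have "boundary L2 z = (\<lambda>_. 0)" using boundary_subcomplex[OF L L2 _ z2] cyc by simp
  then obtain b where b: "b \<in> chains L2 1" "boundary L2 b = z"
    using h2 z2 unfolding cycles_are_boundaries_def by auto
  then show "\<exists>b\<in>chains (L1 \<union> L2) (Suc 0). boundary (L1 \<union> L2) b = z"
    using boundary_subcomplex[OF L L2 _ b(1)] chains_mono[OF b(1)] by auto
qed

lemma boundary_part_in_intersection:
  assumes L1: "finite_complex L1" and L2: "finite_complex L2"
    and z1: "z1 \<in> chains L1 (Suc j)" and z2: "z2 \<in> chains L2 (Suc j)"
    and cyc: "boundary (L1 \<union> L2) (\<lambda>\<sigma>. z1 \<sigma> + z2 \<sigma>) = (\<lambda>_. 0)"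
  shows "boundary L1 z1 = (\<lambda>\<sigma>. - boundary L2 z2 \<sigma>)"
    and "boundary L2 z2 \<in> chains (L1 \<inter> L2) j"
    and "boundary (L1 \<inter> L2) (boundary L2 z2) = (\<lambda>_. (0::'k::field))"
proof -
  have L: "finite_complex (L1 \<union> L2)" using L1 L2 by (rule finite_complex_Un)
  have "boundary (L1 \<union> L2) z1 = boundary L1 z1" "boundary (L1 \<union> L2) z2 = boundary L2 z2"
    using boundary_subcomplex[OF L L1 _ z1] boundary_subcomplex[OF L L2 _ z2] by auto
  then show opp: "boundary L1 z1 = (\<lambda>\<sigma>. - boundary L2 z2 \<sigma>)"
    using cyc unfolding boundary_add by (simp add: fun_eq_iff eq_neg_iff_add_eq_0)
  have "boundary L2 z2 \<in> chains L2 j" "boundary L1 z1 \<in> chains L1 j"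
    using boundary_in_chains[OF L2 z2] boundary_in_chains[OF L1 z1] by auto
  then show d: "boundary L2 z2 \<in> chains (L1 \<inter> L2) j"
    using opp by (auto simp: chains_def)
  have "boundary (L1 \<inter> L2) (boundary L2 z2) = boundary L2 (boundary L2 z2)"
    using boundary_subcomplex[OF L2 finite_complex_Int[OF L1 L2] _ d] by auto
  also have "\<dots> = (\<lambda>_. 0)"
    by (rule boundary_boundary[OF L2]) (use z2 in \<open>auto simp: chains_def\<close>)
  finally show "boundary (L1 \<inter> L2) (boundary L2 z2) = (\<lambda>_. (0::'k))" .
qed

text \<open>Mayer--Vietoris: split a cycle \<open>z = z\<^sub>1 + z\<^sub>2\<close> along the cover, correct both parts by a
  chain \<open>w\<close> of \<open>L\<^sub>1 \<inter> L\<^sub>2\<close> bounding \<open>\<partial>z\<^sub>2\<close>, and fill \<open>z\<^sub>1 + w\<close> and \<open>z\<^sub>2 - w\<close> separately.\<close>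
lemma cycles_are_boundaries_Un:
  assumes L1: "finite_complex L1" and L2: "finite_complex L2"
    and h1: "cycles_are_boundaries TYPE('k::field) L1 j" and h2: "cycles_are_boundaries TYPE('k) L2 j"
    and h12: "0 < j \<Longrightarrow> cycles_are_boundaries TYPE('k) (L1 \<inter> L2) (j - 1)"
  shows "cycles_are_boundaries TYPE('k) (L1 \<union> L2) j"
proof (cases j)
  case 0
  then show ?thesis using cycles_are_boundaries_Un_0[OF L1 L2] h2 by simp
next
  case (Suc i)
  let ?L = "L1 \<union> L2"
  have L: "finite_complex ?L" and L12: "finite_complex (L1 \<inter> L2)"
    using L1 L2 by (simp_all add: finite_complex_Un finite_complex_Int)
  show ?thesis
    unfolding cycles_are_boundaries_def
  proof (intro allI impI)
    fix z :: "nat set \<Rightarrow> 'k" assume "z \<in> chains ?L j \<and> boundary ?L z = (\<lambda>_. 0)"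
    then have z: "z \<in> chains ?L j" and cyc: "boundary ?L z = (\<lambda>_. 0)" by auto
    define z1 where "z1 \<sigma> = (if \<sigma> \<in> L2 then 0 else z \<sigma>)" for \<sigma>
    define z2 where "z2 \<sigma> = (if \<sigma> \<in> L2 then z \<sigma> else 0)" for \<sigma>
    have zs: "z = (\<lambda>\<sigma>. z1 \<sigma> + z2 \<sigma>)" by (auto simp: z1_def z2_def fun_eq_iff)
    have z1: "z1 \<in> chains L1 j" and z2: "z2 \<in> chains L2 j"
      using z by (auto simp: chains_def z1_def z2_def)
    note bd = boundary_part_in_intersection[OF L1 L2 z1[unfolded Suc] z2[unfolded Suc] cyc[unfolded zs]]
    obtain w where w: "w \<in> chains (L1 \<inter> L2) j" "boundary (L1 \<inter> L2) w = boundary L2 z2"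
      using h12 bd(2,3) Suc unfolding cycles_are_boundaries_def by auto
    have bw: "boundary L1 w = boundary L2 z2" "boundary L2 w = boundary L2 z2"
      using w boundary_subcomplex[OF L1 L12 _ w(1)] boundary_subcomplex[OF L2 L12 _ w(1)] by auto
    have w1: "w \<in> chains L1 j" and w2: "w \<in> chains L2 j" using w(1) chains_mono by blast+
    have "boundary L1 (\<lambda>\<sigma>. z1 \<sigma> + w \<sigma>) = (\<lambda>_. 0)"
      unfolding boundary_add bw bd(1) by simp
    then obtain b1 where b1: "b1 \<in> chains L1 (Suc j)" "boundary L1 b1 = (\<lambda>\<sigma>. z1 \<sigma> + w \<sigma>)"
      using h1 chains_add[OF z1 w1] unfolding cycles_are_boundaries_def by blast
    have "boundary L2 (\<lambda>\<sigma>. z2 \<sigma> - w \<sigma>) = (\<lambda>_. 0)"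
      unfolding boundary_diff bw by simp
    then obtain b2 where b2: "b2 \<in> chains L2 (Suc j)" "boundary L2 b2 = (\<lambda>\<sigma>. z2 \<sigma> - w \<sigma>)"
      using h2 chains_diff[OF z2 w2] unfolding cycles_are_boundaries_def by blast
    have "boundary ?L b1 = (\<lambda>\<sigma>. z1 \<sigma> + w \<sigma>)" "boundary ?L b2 = (\<lambda>\<sigma>. z2 \<sigma> - w \<sigma>)"
      using boundary_subcomplex[OF L L1 _ b1(1)] boundary_subcomplex[OF L L2 _ b2(1)] b1(2) b2(2)
      by auto
    then have "boundary ?L (\<lambda>\<sigma>. b1 \<sigma> + b2 \<sigma>) = z"
      unfolding boundary_add zs by (simp add: fun_eq_iff)
    moreover have "(\<lambda>\<sigma>. b1 \<sigma> + b2 \<sigma>) \<in> chains ?L (Suc j)"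
      using chains_mono[OF b1(1)] chains_mono[OF b2(1)] by (intro chains_add) auto
    ultimately show "\<exists>b\<in>chains ?L (Suc j). boundary ?L b = z" by blast
  qed
qed


section \<open>Nerves of covers\<close>

definition nerve :: "(nat \<Rightarrow> 'a set) \<Rightarrow> nat set \<Rightarrow> nat set set" where
  "nerve G I = {S. S \<subseteq> I \<and> (S = {} \<or> (\<exists>x. \<forall>i\<in>S. x \<in> G i))}"

definition generated_complex :: "(nat \<Rightarrow> 'a set) \<Rightarrow> nat set \<Rightarrow> 'a set \<Rightarrow> 'a set set" where
  "generated_complex G I W = {T. T \<subseteq> W \<and> (T = {} \<or> (\<exists>i\<in>I. T \<subseteq> G i))}"

definition minimal_nonfaces :: "'a set set \<Rightarrow> 'a set \<Rightarrow> 'a set set" where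
  "minimal_nonfaces K W = {T. T \<subseteq> W \<and> T \<notin> K \<and> (\<forall>u\<in>T. T - {u} \<in> K)}"

lemma finite_complex_nerve:
  assumes "finite I" shows "finite_complex (nerve G I)"
  unfolding finite_complex_def
proof (intro conjI ballI allI impI)
  show "{} \<in> nerve G I" by (simp add: nerve_def)
  show "finite (\<Union>(nerve G I))" by (rule finite_subset[OF _ assms]) (auto simp: nerve_def)
  fix F H assume "F \<in> nerve G I" "H \<subseteq> F"
  then show "H \<in> nerve G I" unfolding nerve_def by blast
qed

lemma nerve_Int_Pow: "A \<subseteq> I \<Longrightarrow> nerve G I \<inter> Pow A = nerve G A"
  by (auto simp: nerve_def)

lemma nerve_vertex_split: "nerve G I = nerve (\<lambda>i. G i - {v}) I \<union> Pow {i\<in>I. v \<in> G i}"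
proof (intro equalityI subsetI)
  fix S assume S: "S \<in> nerve G I"
  show "S \<in> nerve (\<lambda>i. G i - {v}) I \<union> Pow {i\<in>I. v \<in> G i}"
  proof (cases "S = {}")
    case False
    then obtain x where "\<forall>i\<in>S. x \<in> G i" using S by (auto simp: nerve_def)
    then show ?thesis using S by (cases "x = v") (auto simp: nerve_def)
  qed (simp add: nerve_def)
qed (auto simp: nerve_def)

lemma generated_complex_downward_closed:
  "\<forall>F\<in>generated_complex G I W. \<forall>H. H \<subseteq> F \<longrightarrow> H \<in> generated_complex G I W"
  unfolding generated_complex_def by blast

lemma minimal_nonfaces_exist:
  assumes K: "\<forall>F\<in>K. \<forall>G. G \<subseteq> F \<longrightarrow> G \<in> K" and "finite T" "T \<notin> K"
  shows "minimal_nonfaces K T \<noteq> {}"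
  using \<open>finite T\<close> \<open>T \<notin> K\<close>
proof (induction "card T" arbitrary: T rule: less_induct)
  case less
  show ?case
  proof (cases "\<forall>u\<in>T. T - {u} \<in> K")
    case True then show ?thesis using less.prems by (auto simp: minimal_nonfaces_def)
  next
    case False
    then obtain u where u: "u \<in> T" "T - {u} \<notin> K" by blast
    have "card (T - {u}) < card T" by (rule card_Diff1_less[OF less.prems(1) u(1)])
    then have "minimal_nonfaces K (T - {u}) \<noteq> {}"
      using less.hyps[of "T - {u}"] less.prems(1) u(2) by simp
    moreover have "minimal_nonfaces K (T - {u}) \<subseteq> minimal_nonfaces K T"
      by (auto simp: minimal_nonfaces_def)
    ultimately show ?thesis by blast
  qed
qed

lemma finite_minimal_nonfaces: "finite W \<Longrightarrow> finite (minimal_nonfaces K W)"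
  unfolding minimal_nonfaces_def by (rule finite_subset[of _ "Pow W"]) auto

lemma minimal_nonfaces_cong:
  assumes "\<And>T. T \<subseteq> W \<Longrightarrow> T \<in> K \<longleftrightarrow> T \<in> K'"
  shows "minimal_nonfaces K W = minimal_nonfaces K' W"
proof -
  have "T - {u} \<in> K \<longleftrightarrow> T - {u} \<in> K'" if "T \<subseteq> W" for T u
    using assms[of "T - {u}"] that by auto
  then show ?thesis unfolding minimal_nonfaces_def using assms by auto
qed

lemma card_minimal_nonfaces_delete:
  assumes "finite W" "T0 \<in> minimal_nonfaces K W" "v \<in> T0"
  shows "card (minimal_nonfaces K (W - {v})) < card (minimal_nonfaces K W)"
proof (rule psubset_card_mono[OF finite_minimal_nonfaces[OF \<open>finite W\<close>]])
  show "minimal_nonfaces K (W - {v}) \<subset> minimal_nonfaces K W"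
    using assms(2,3) by (auto simp: minimal_nonfaces_def)
qed

lemma minimal_nonface_of_link:
  assumes K: "\<forall>F\<in>K. \<forall>G. G \<subseteq> F \<longrightarrow> G \<in> K" and "v \<in> W"
    and T: "T \<in> minimal_nonfaces {T. insert v T \<in> K} (W - {v})" "insert v T \<notin> minimal_nonfaces K W"
  shows "T \<in> minimal_nonfaces K W"
proof -
  have sub: "T \<subseteq> W - {v}" "\<forall>u\<in>T. insert v (T - {u}) \<in> K" and nl: "insert v T \<notin> K"
    using T(1) by (auto simp: minimal_nonfaces_def)
  have "T \<notin> K"
  proof
    assume "T \<in> K"
    have "insert v T - {u} \<in> K" if "u \<in> insert v T" for u
    proof (cases "u = v")
      case True
      moreover have "v \<notin> T" using sub(1) by auto
      ultimately show ?thesis using \<open>T \<in> K\<close> by (simp add: Diff_insert_absorb)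
    next
      case False
      then have "insert v T - {u} = insert v (T - {u})" by auto
      then show ?thesis using sub(2) that False by simp
    qed
    then have "insert v T \<in> minimal_nonfaces K W"
      using sub(1) nl \<open>v \<in> W\<close> by (auto simp: minimal_nonfaces_def)
    then show False using T(2) by simp
  qed
  moreover have "T - {u} \<in> K" if "u \<in> T" for u
    using K sub(2) that by (meson subset_insertI)
  ultimately show ?thesis using sub(1) by (auto simp: minimal_nonfaces_def)
qed

text \<open>The minimal nonfaces of the link of \<open>v\<close> inject into those of \<open>K\<close>: \<open>T \<mapsto> T \<union> {v}\<close> if that
  is a minimal nonface, and \<open>T\<close> itself otherwise.\<close>
lemma card_minimal_nonfaces_link:
  assumes K: "\<forall>F\<in>K. \<forall>G. G \<subseteq> F \<longrightarrow> G \<in> K" and W: "finite W" "v \<in> W"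
  shows "card (minimal_nonfaces {T. insert v T \<in> K} (W - {v})) \<le> card (minimal_nonfaces K W)"
proof -
  let ?M = "minimal_nonfaces {T. insert v T \<in> K} (W - {v})"
  define f where "f T = (if insert v T \<in> minimal_nonfaces K W then insert v T else T)" for T
  have "f ` ?M \<subseteq> minimal_nonfaces K W"
    using minimal_nonface_of_link[OF K W(2)] by (auto simp: f_def)
  moreover have "inj_on f ?M"
    by (rule inj_on_inverseI[of _ "\<lambda>X. X - {v}"]) (auto simp: f_def minimal_nonfaces_def)
  ultimately show ?thesis
    using card_inj_on_le finite_minimal_nonfaces[OF W(1)] by blast
qed

lemma card_minimal_nonfaces_generated_delete:
  assumes "finite W" "T0 \<in> minimal_nonfaces (generated_complex G I W) W" "v \<in> T0"
  shows "card (minimal_nonfaces (generated_complex (\<lambda>i. G i - {v}) I (W - {v})) (W - {v}))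
    < card (minimal_nonfaces (generated_complex G I W) W)"
proof -
  have "minimal_nonfaces (generated_complex (\<lambda>i. G i - {v}) I (W - {v})) (W - {v})
      = minimal_nonfaces (generated_complex G I W) (W - {v})"
    by (rule minimal_nonfaces_cong) (auto simp: generated_complex_def)
  then show ?thesis using card_minimal_nonfaces_delete[OF assms] by simp
qed

lemma card_minimal_nonfaces_generated_link:
  assumes "finite W" "v \<in> W" "\<forall>i\<in>I. G i \<subseteq> W" "{i\<in>I. v \<in> G i} \<noteq> {}"
  shows "card (minimal_nonfaces (generated_complex (\<lambda>i. G i - {v}) {i\<in>I. v \<in> G i} (W - {v})) (W - {v}))
    \<le> card (minimal_nonfaces (generated_complex G I W) W)"
proof -
  have "minimal_nonfaces (generated_complex (\<lambda>i. G i - {v}) {i\<in>I. v \<in> G i} (W - {v})) (W - {v})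
      = minimal_nonfaces {T. insert v T \<in> generated_complex G I W} (W - {v})"
    by (rule minimal_nonfaces_cong) (use assms(2-4) in \<open>auto simp: generated_complex_def\<close>)
  then show ?thesis
    using card_minimal_nonfaces_link[OF generated_complex_downward_closed assms(1,2)] by simp
qed

lemma cover_of_no_minimal_nonfaces:
  assumes "finite W" "W \<noteq> {}" "minimal_nonfaces (generated_complex G I W) W = {}"
  obtains i where "i \<in> I" "W \<subseteq> G i"
proof -
  have "W \<in> generated_complex G I W"
    using minimal_nonfaces_exist[OF generated_complex_downward_closed assms(1)] assms(3) by blast
  then show ?thesis using assms(2) that by (auto simp: generated_complex_def)
qed

lemma nerve_cone:
  assumes "i \<in> I" "W \<noteq> {}" "W \<subseteq> G i" "\<forall>i\<in>I. G i \<subseteq> W"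
  shows "\<forall>S\<in>nerve G I. insert i S \<in> nerve G I"
proof
  fix S assume S: "S \<in> nerve G I"
  have "\<exists>x\<in>W. \<forall>k\<in>S. x \<in> G k"
  proof (cases "S = {}")
    case False
    then obtain x k where "\<forall>k\<in>S. x \<in> G k" "k \<in> S" using S by (auto simp: nerve_def)
    then show ?thesis using S assms(4) by (auto simp: nerve_def)
  qed (use assms(2) in auto)
  then show "insert i S \<in> nerve G I" using S assms(1,3) by (auto simp: nerve_def)
qed

text \<open>Induction on \<open>|W|\<close>, removing a vertex \<open>v\<close> of a minimal nonface: the nerve is the union of the
  nerve of the deletion (one minimal nonface fewer) and the simplex on the sets containing \<open>v\<close>,
  which meet in the nerve of the link of \<open>v\<close> (no more minimal nonfaces); conclude by
  Mayer--Vietoris.\<close>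
lemma nerve_cycles_are_boundaries:
  assumes "finite W" "finite I" "\<forall>i\<in>I. G i \<subseteq> W"
    and "j + 1 + card (minimal_nonfaces (generated_complex G I W) W) \<le> card W"
  shows "cycles_are_boundaries TYPE('k::field) (nerve G I) j"
  using assms
proof (induction "card W" arbitrary: W G I j rule: less_induct)
  case less
  note W = less.prems(1) and I = less.prems(2) and GW = less.prems(3)
  let ?K = "generated_complex G I W"
  have "W \<noteq> {}" using less.prems(4) W by auto
  show ?case
  proof (cases "minimal_nonfaces ?K W = {}")
    case True
    then obtain i where "i \<in> I" "W \<subseteq> G i" using cover_of_no_minimal_nonfaces W \<open>W \<noteq> {}\<close> by blast
    then show ?thesis
      using nerve_cone[OF _ \<open>W \<noteq> {}\<close> _ GW] cycles_are_boundaries_cone[OF finite_complex_nerve[OF I]]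
      by blast
  next
    case False
    then obtain T0 where T0: "T0 \<in> minimal_nonfaces ?K W" by blast
    then obtain v where v: "v \<in> T0" "v \<in> W"
      by (auto simp: minimal_nonfaces_def generated_complex_def)
    define G' where "G' = (\<lambda>i. G i - {v})"
    define A where "A = {i\<in>I. v \<in> G i}"
    have cW: "card (W - {v}) < card W" "card (W - {v}) = card W - 1"
      using card_Diff1_less[OF W v(2)] v(2) by simp_all
    have G'W: "\<forall>i\<in>I. G' i \<subseteq> W - {v}" using GW by (auto simp: G'_def)
    have deletion: "cycles_are_boundaries TYPE('k) (nerve G' I) j"
      using less(1)[OF cW(1) _ I G'W] less.prems(4) cW(2) W
        card_minimal_nonfaces_generated_delete[OF W T0 v(1)]
      by (simp add: G'_def)
    show ?thesis
    proof (cases "A = {}")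
      case True
      then have "nerve G I = nerve G' I" unfolding G'_def A_def
        by (subst nerve_vertex_split[of _ _ v]) (auto simp: nerve_def)
      then show ?thesis using deletion by simp
    next
      case False
      have link: "cycles_are_boundaries TYPE('k) (nerve G' A) (j - 1)" if "0 < j"
        using less(1)[OF cW(1) _ _ , of A G' "j - 1"] less.prems(4) cW(2) W I G'W that
          card_minimal_nonfaces_generated_link[OF W v(2) GW] False
        by (simp add: A_def G'_def)
      have "A \<subseteq> I" "finite A" using I by (auto simp: A_def)
      obtain a where "a \<in> A" using False by auto
      then have "cycles_are_boundaries TYPE('k) (Pow A) j"
        by (intro cycles_are_boundaries_cone finite_complex_Pow[OF \<open>finite A\<close>]) auto
      then have "cycles_are_boundaries TYPE('k) (nerve G' I \<union> Pow A) j"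
        by (rule cycles_are_boundaries_Un[OF finite_complex_nerve[OF I]
              finite_complex_Pow[OF \<open>finite A\<close>] deletion])
          (use link in \<open>simp add: nerve_Int_Pow[OF \<open>A \<subseteq> I\<close>]\<close>)
      then show ?thesis using nerve_vertex_split[of G I v] by (simp add: G'_def A_def)
    qed
  qed
qed

section \<open>Ideals of polynomial rings\<close>

lemma is_ideal_ideal_gen: "is_ideal (ideal_gen S)"
  unfolding ideal_gen_def is_ideal_def by blast

lemma subset_ideal_gen: "S \<subseteq> ideal_gen S"
  unfolding ideal_gen_def by blast

lemma ideal_gen_minimal: "is_ideal J \<Longrightarrow> S \<subseteq> J \<Longrightarrow> ideal_gen S \<subseteq> J"
  unfolding ideal_gen_def by blast

lemma ideal_sum_mem: "is_ideal J \<Longrightarrow> (\<forall>a\<in>A. f a \<in> J) \<Longrightarrow> sum f A \<in> J"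
  by (induction A rule: infinite_finite_induct) (simp_all add: is_ideal_def)

lemma ideal_mult_left_mem: "is_ideal J \<Longrightarrow> a \<in> J \<Longrightarrow> r * a \<in> J"
  by (simp add: is_ideal_def)

lemma ideal_mult_right_mem: "is_ideal J \<Longrightarrow> a \<in> J \<Longrightarrow> a * r \<in> J"
  by (metis ideal_mult_left_mem mult.commute)

lemma ideal_diff_mem:
  assumes "is_ideal J" "a \<in> J" "b \<in> J" shows "a - b \<in> J"
proof -
  have "- b \<in> J" using ideal_mult_left_mem[OF assms(1,3), of "- 1"] by simp
  then have "a + - b \<in> J" using assms(1,2) unfolding is_ideal_def by blast
  then show ?thesis by simp
qed

lemma prime_ideal_prod_mem:
  assumes Q: "is_prime_ideal Q" and "finite F" and "prod f F \<in> Q"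
  shows "\<exists>v\<in>F. f v \<in> Q"
  using \<open>finite F\<close> \<open>prod f F \<in> Q\<close>
proof (induction F rule: finite_induct)
  case empty
  then have "r \<in> Q" for r using Q ideal_mult_left_mem[of Q 1 r] by (simp add: is_prime_ideal_def)
  then show ?case using Q by (auto simp: is_prime_ideal_def)
next
  case (insert x F)
  then show ?case using Q by (auto simp: is_prime_ideal_def)
qed

lemma radical_prime_ideal:
  assumes P: "is_prime_ideal P" shows "radical P = P"
proof
  show "radical P \<subseteq> P"
  proof
    fix f assume "f \<in> radical P"
    then obtain m where "f ^ m \<in> P" unfolding radical_def by auto
    then show "f \<in> P"
    proof (induction m)
      case 0
      then show ?case using prime_ideal_prod_mem[OF P, of "{}"] by simp
    next
      case (Suc m)
      then show ?case using P by (auto simp: is_prime_ideal_def)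
    qed
  qed
  show "P \<subseteq> radical P" unfolding radical_def by (auto intro: exI[of _ 1])
qed

lemma keys_add_nat: "Poly_Mapping.keys (a + b :: 'n \<Rightarrow>\<^sub>0 nat) = Poly_Mapping.keys a \<union> Poly_Mapping.keys b"
  by (auto simp: in_keys_iff lookup_add)

lemma poly_mapping_sum_monomials:
  "f = (\<Sum>\<alpha>\<in>Poly_Mapping.keys f. Poly_Mapping.single \<alpha> (Poly_Mapping.lookup f \<alpha>))"
  by (rule poly_mapping_eqI) (auto simp: lookup_sum lookup_single when_def in_keys_iff sum.delta')

lemma lookup_mult_keys:
  fixes f g :: "('a::comm_monoid_add \<Rightarrow>\<^sub>0 'b::comm_semiring_1)"
  shows "Poly_Mapping.lookup (f * g) k =
    (\<Sum>x\<in>Poly_Mapping.keys f. \<Sum>y\<in>Poly_Mapping.keys g.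
        (if k = x + y then Poly_Mapping.lookup f x * Poly_Mapping.lookup g y else 0))"
proof -
  have inner: "(\<Sum>q. Poly_Mapping.lookup g q when k = l + q) =
      (\<Sum>y\<in>Poly_Mapping.keys g. (if k = l + y then Poly_Mapping.lookup g y else 0))" for l
    by (subst Sum_any.expand_superset[of "Poly_Mapping.keys g"])
      (auto simp: when_def in_keys_iff intro!: sum.cong)
  have "Poly_Mapping.lookup (f * g) k = (\<Sum>l. Poly_Mapping.lookup f l *
      (\<Sum>y\<in>Poly_Mapping.keys g. (if k = l + y then Poly_Mapping.lookup g y else 0)))"
    by (simp add: lookup_mult inner)
  also have "\<dots> = (\<Sum>l\<in>Poly_Mapping.keys f. Poly_Mapping.lookup f l *
      (\<Sum>y\<in>Poly_Mapping.keys g. (if k = l + y then Poly_Mapping.lookup g y else 0)))"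
    by (subst Sum_any.expand_superset[of "Poly_Mapping.keys f"]) (auto simp: in_keys_iff)
  finally show ?thesis by (simp add: sum_distrib_left if_distrib cong: if_cong)
qed

lemma keys_mult_obtain:
  assumes "\<alpha> \<in> Poly_Mapping.keys (r * f :: ('n, 'k::comm_ring_1) mpoly)"
  obtains \<beta> where "\<beta> \<in> Poly_Mapping.keys f" "Poly_Mapping.keys \<beta> \<subseteq> Poly_Mapping.keys \<alpha>"
  using subsetD[OF keys_mult assms] by (auto simp: keys_add_nat)

text \<open>An injective monoid homomorphism into the linearly ordered monoid \<open>nat \<Rightarrow>\<^sub>0 nat\<close>, through
  which leading exponents can be compared although the variables are unordered.\<close>
definition exponent_embedding :: "('n \<Rightarrow> nat) \<Rightarrow> ('n::finite \<Rightarrow>\<^sub>0 nat) \<Rightarrow> (nat \<Rightarrow>\<^sub>0 nat)" where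
  "exponent_embedding e \<alpha> = (\<Sum>v\<in>UNIV. Poly_Mapping.single (e v) (Poly_Mapping.lookup \<alpha> v))"

lemma lookup_exponent_embedding:
  "inj e \<Longrightarrow> Poly_Mapping.lookup (exponent_embedding e \<alpha>) (e v) = Poly_Mapping.lookup \<alpha> v"
  unfolding exponent_embedding_def lookup_sum lookup_single
  by (subst sum.remove[of _ v]) (auto simp: when_def inj_eq intro!: sum.neutral)

lemma exponent_embedding_add:
  "exponent_embedding e (\<alpha> + \<beta>) = exponent_embedding e \<alpha> + exponent_embedding e \<beta>"
  unfolding exponent_embedding_def by (simp add: lookup_add single_add sum.distrib)

lemma exponent_embedding_inj: "inj e \<Longrightarrow> inj (exponent_embedding e)"
  by (intro injI poly_mapping_eqI) (metis lookup_exponent_embedding)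

lemma sum_eq_single:
  assumes "finite A" "a \<in> A" "\<And>x. x \<in> A \<Longrightarrow> x \<noteq> a \<Longrightarrow> f x = 0"
  shows "sum f A = f a"
  using assms by (simp add: sum.remove[of A a] sum.neutral)

lemma ex_max_image:
  fixes f :: "'a \<Rightarrow> 'b::linorder"
  assumes "finite A" "A \<noteq> {}"
  shows "\<exists>a\<in>A. \<forall>x\<in>A. f x \<le> f a"
proof -
  have "Max (f ` A) \<in> f ` A" using assms by (intro Max_in) auto
  then obtain a where "a \<in> A" "f a = Max (f ` A)" by (metis imageE)
  moreover have "f x \<le> Max (f ` A)" if "x \<in> A" for x using assms(1) that by (simp add: Max_ge)
  ultimately show ?thesis by (intro bexI[of _ a]) auto
qed

lemma lookup_mult_max_exponents:
  fixes f g :: "('n::finite, 'k::idom) mpoly"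
  assumes e: "inj e" and a: "a \<in> Poly_Mapping.keys f" "\<forall>x\<in>Poly_Mapping.keys f. \<kappa> x \<le> \<kappa> a"
    and b: "b \<in> Poly_Mapping.keys g" "\<forall>y\<in>Poly_Mapping.keys g. \<kappa> y \<le> \<kappa> b"
    and \<kappa>: "\<kappa> = exponent_embedding e"
  shows "Poly_Mapping.lookup (f * g) (a + b) = Poly_Mapping.lookup f a * Poly_Mapping.lookup g b"
proof -
  have uniq: "x = a \<and> y = b"
    if x: "x \<in> Poly_Mapping.keys f" and y: "y \<in> Poly_Mapping.keys g" and xy: "a + b = x + y" for x y
  proof -
    have sum: "\<kappa> a + \<kappa> b = \<kappa> x + \<kappa> y" using xy \<kappa> by (metis exponent_embedding_add)
    have "\<kappa> x = \<kappa> a"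
    proof (rule ccontr)
      assume "\<kappa> x \<noteq> \<kappa> a"
      then have "\<kappa> x < \<kappa> a" using a(2) x by (simp add: order_le_neq_trans)
      then have "\<kappa> x + \<kappa> y < \<kappa> a + \<kappa> b" using b(2) y by (simp add: add_less_le_mono)
      then show False using sum by simp
    qed
    then have "x = a" using exponent_embedding_inj[OF e] \<kappa> by (auto dest: injD)
    then show ?thesis using xy by simp
  qed
  have "Poly_Mapping.lookup (f * g) (a + b) = (\<Sum>y\<in>Poly_Mapping.keys g.
      if a + b = a + y then Poly_Mapping.lookup f a * Poly_Mapping.lookup g y else 0)"
    unfolding lookup_mult_keys
  proof (rule sum_eq_single)
    show "(\<Sum>y\<in>Poly_Mapping.keys g. if a + b = x + y then Poly_Mapping.lookup f x * Poly_Mapping.lookup g y else 0) = 0"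
      if "x \<in> Poly_Mapping.keys f" "x \<noteq> a" for x
      using uniq that by (intro sum.neutral) auto
  qed (simp_all add: a(1))
  also have "\<dots> = Poly_Mapping.lookup f a * Poly_Mapping.lookup g b"
    by (rule trans[OF sum_eq_single[of _ b]]) (use b(1) in auto)
  finally show ?thesis .
qed

lemma mpoly_mult_ne_zero:
  fixes f g :: "('n::finite, 'k::idom) mpoly"
  assumes "f \<noteq> 0" "g \<noteq> 0"
  shows "f * g \<noteq> 0"
proof -
  obtain e :: "'n \<Rightarrow> nat" where e: "inj e"
    using finite_imp_inj_to_nat_seg[of "UNIV :: 'n set"] by auto
  obtain a where a: "a \<in> Poly_Mapping.keys f"
      "\<forall>x\<in>Poly_Mapping.keys f. exponent_embedding e x \<le> exponent_embedding e a"
    using ex_max_image[of "Poly_Mapping.keys f"] assms(1) by auto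
  obtain b where b: "b \<in> Poly_Mapping.keys g"
      "\<forall>y\<in>Poly_Mapping.keys g. exponent_embedding e y \<le> exponent_embedding e b"
    using ex_max_image[of "Poly_Mapping.keys g"] assms(2) by auto
  have "Poly_Mapping.lookup (f * g) (a + b) \<noteq> 0"
    using lookup_mult_max_exponents[OF e a b refl] a(1) b(1) by (simp add: in_keys_iff)
  then show ?thesis by auto
qed

section \<open>Minimal primes of Stanley--Reisner rings\<close>

definition support_ideal :: "('n set \<Rightarrow> bool) \<Rightarrow> ('n, 'k::comm_ring_1) mpoly set" where
  "support_ideal Q = {f. \<forall>\<alpha>\<in>Poly_Mapping.keys f. Q (Poly_Mapping.keys \<alpha>)}"

text \<open>The ideal \<open>(x\<^sub>v : v \<notin> F)\<close>: every monomial of its elements involves a variable outside \<open>F\<close>.\<close>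
definition face_ideal :: "'n set \<Rightarrow> ('n, 'k::comm_ring_1) mpoly set" where
  "face_ideal F = support_ideal (\<lambda>S. \<not> S \<subseteq> F)"

definition facets :: "'n set set \<Rightarrow> 'n set set" where
  "facets K = {F\<in>K. \<forall>G\<in>K. F \<subseteq> G \<longrightarrow> G = F}"

definition sqfree_exponent :: "'n set \<Rightarrow> ('n \<Rightarrow>\<^sub>0 nat)" where
  "sqfree_exponent F = (\<Sum>v\<in>F. Poly_Mapping.single v 1)"

lemma lookup_sqfree_exponent:
  "finite F \<Longrightarrow> Poly_Mapping.lookup (sqfree_exponent F) w = (if w \<in> F then 1 else 0)"
  by (simp add: sqfree_exponent_def lookup_sum lookup_single when_def)

lemma keys_sqfree_exponent: "finite F \<Longrightarrow> Poly_Mapping.keys (sqfree_exponent F) = F"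
  by (auto simp: in_keys_iff lookup_sqfree_exponent split: if_splits)

lemma sqfree_exponent_eq_iff: "sqfree_exponent A = sqfree_exponent B \<longleftrightarrow> A = (B :: 'n::finite set)"
  by (metis finite keys_sqfree_exponent)

lemma prod_pvar:
  "finite F \<Longrightarrow> (\<Prod>v\<in>F. pvar v) = (Poly_Mapping.single (sqfree_exponent F) 1 :: ('n, 'k::comm_ring_1) mpoly)"
proof (induction F rule: finite_induct)
  case (insert x F)
  then show ?case by (simp add: sqfree_exponent_def pvar_def mult_single add.commute)
qed (simp add: sqfree_exponent_def)

lemma keys_pvar: "Poly_Mapping.keys (pvar v :: ('n, 'k::comm_ring_1) mpoly) = {Poly_Mapping.single v 1}"
  by (simp add: pvar_def)

lemma is_ideal_support_ideal:
  assumes up: "\<And>A B. A \<subseteq> B \<Longrightarrow> Q A \<Longrightarrow> Q B"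
  shows "is_ideal (support_ideal Q :: ('n, 'k::comm_ring_1) mpoly set)"
  unfolding is_ideal_def
proof (intro conjI ballI allI)
  show "0 \<in> support_ideal Q" by (simp add: support_ideal_def)
  fix a b :: "('n, 'k) mpoly" assume a: "a \<in> support_ideal Q" and b: "b \<in> support_ideal Q"
  show "a + b \<in> support_ideal Q"
    unfolding support_ideal_def
  proof (rule CollectI, rule ballI)
    fix \<alpha> assume "\<alpha> \<in> Poly_Mapping.keys (a + b)"
    then have "\<alpha> \<in> Poly_Mapping.keys a \<or> \<alpha> \<in> Poly_Mapping.keys b" using keys_add[of a b] by blast
    then show "Q (Poly_Mapping.keys \<alpha>)" using a b by (auto simp: support_ideal_def)
  qed
next
  fix r a :: "('n, 'k) mpoly" assume a: "a \<in> support_ideal Q"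
  show "r * a \<in> support_ideal Q"
    unfolding support_ideal_def
  proof (rule CollectI, rule ballI)
    fix \<alpha> assume "\<alpha> \<in> Poly_Mapping.keys (r * a)"
    then obtain \<beta> where "\<beta> \<in> Poly_Mapping.keys a" "Poly_Mapping.keys \<beta> \<subseteq> Poly_Mapping.keys \<alpha>"
      by (rule keys_mult_obtain)
    then show "Q (Poly_Mapping.keys \<alpha>)" using a up by (auto simp: support_ideal_def)
  qed
qed

lemma is_ideal_face_ideal: "is_ideal (face_ideal F :: ('n, 'k::comm_ring_1) mpoly set)"
  unfolding face_ideal_def by (rule is_ideal_support_ideal) blast

lemma pvar_in_face_ideal_iff: "pvar v \<in> (face_ideal F :: ('n, 'k::comm_ring_1) mpoly set) \<longleftrightarrow> v \<notin> F"
  by (simp add: face_ideal_def support_ideal_def keys_pvar)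

lemma single_eq_mult_pvar:
  assumes "v \<in> Poly_Mapping.keys \<alpha>"
  shows "(Poly_Mapping.single \<alpha> c :: ('n, 'k::comm_ring_1) mpoly)
    = Poly_Mapping.single (\<alpha> - Poly_Mapping.single v 1) c * pvar v"
proof -
  have "\<alpha> - Poly_Mapping.single v 1 + Poly_Mapping.single v 1 = \<alpha>"
  proof (rule poly_mapping_eqI)
    fix w
    have "Poly_Mapping.lookup \<alpha> v \<noteq> 0" using assms by (simp add: in_keys_iff)
    then show "Poly_Mapping.lookup (\<alpha> - Poly_Mapping.single v 1 + Poly_Mapping.single v 1) w
        = Poly_Mapping.lookup \<alpha> w"
      by (cases "v = w") (simp_all add: lookup_add lookup_minus lookup_single when_def)
  qed
  then show ?thesis by (simp add: pvar_def mult_single)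
qed

lemma face_ideal_subset:
  assumes J: "is_ideal J" and vars: "\<And>v. v \<notin> F \<Longrightarrow> pvar v \<in> J"
  shows "face_ideal F \<subseteq> (J :: ('n, 'k::comm_ring_1) mpoly set)"
proof
  fix f :: "('n, 'k) mpoly" assume f: "f \<in> face_ideal F"
  have "Poly_Mapping.single \<alpha> (Poly_Mapping.lookup f \<alpha>) \<in> J" if "\<alpha> \<in> Poly_Mapping.keys f" for \<alpha>
  proof -
    have "\<not> Poly_Mapping.keys \<alpha> \<subseteq> F" using f that by (simp add: face_ideal_def support_ideal_def)
    then obtain v where "v \<in> Poly_Mapping.keys \<alpha>" "v \<notin> F" by blast
    then show ?thesis unfolding single_eq_mult_pvar[OF \<open>v \<in> Poly_Mapping.keys \<alpha>\<close>]
      by (intro ideal_mult_left_mem[OF J] vars)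
  qed
  then have "(\<Sum>\<alpha>\<in>Poly_Mapping.keys f. Poly_Mapping.single \<alpha> (Poly_Mapping.lookup f \<alpha>)) \<in> J"
    by (intro ideal_sum_mem[OF J]) blast
  then show "f \<in> J" by (simp only: poly_mapping_sum_monomials[of f, symmetric])
qed

lemma face_ideal_subset_iff:
  "face_ideal A \<subseteq> (face_ideal B :: ('n, 'k::comm_ring_1) mpoly set) \<longleftrightarrow> B \<subseteq> A"
proof
  assume sub: "face_ideal A \<subseteq> (face_ideal B :: ('n, 'k) mpoly set)"
  show "B \<subseteq> A"
  proof
    fix v assume v: "v \<in> B"
    show "v \<in> A"
    proof (rule ccontr)
      assume "v \<notin> A"
      then have "(pvar v :: ('n, 'k) mpoly) \<in> face_ideal A" by (simp add: pvar_in_face_ideal_iff)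
      then have "(pvar v :: ('n, 'k) mpoly) \<in> face_ideal B" using sub by (rule subsetD[rotated])
      then show False using v by (simp add: pvar_in_face_ideal_iff)
    qed
  qed
qed (auto simp: face_ideal_def support_ideal_def)

lemma face_ideal_eq_iff: "face_ideal A = (face_ideal B :: ('n, 'k::comm_ring_1) mpoly set) \<longleftrightarrow> A = B"
  unfolding set_eq_subset[of "face_ideal A"] face_ideal_subset_iff by auto

definition restrict_support :: "'n set \<Rightarrow> ('n, 'k::comm_ring_1) mpoly \<Rightarrow> ('n, 'k) mpoly" where
  "restrict_support F f = (\<Sum>\<alpha>\<in>{\<alpha>\<in>Poly_Mapping.keys f. Poly_Mapping.keys \<alpha> \<subseteq> F}.
      Poly_Mapping.single \<alpha> (Poly_Mapping.lookup f \<alpha>))"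

lemma lookup_restrict_support:
  "Poly_Mapping.lookup (restrict_support F f) \<beta>
    = (if Poly_Mapping.keys \<beta> \<subseteq> F then Poly_Mapping.lookup f \<beta> else 0)"
  by (simp add: restrict_support_def lookup_sum lookup_single when_def sum.delta' in_keys_iff)

lemma keys_restrict_support:
  "\<alpha> \<in> Poly_Mapping.keys (restrict_support F f) \<Longrightarrow> Poly_Mapping.keys \<alpha> \<subseteq> F"
  by (metis in_keys_iff lookup_restrict_support)

lemma diff_restrict_support_in_face_ideal: "f - restrict_support F f \<in> face_ideal F"
  by (auto simp: face_ideal_def support_ideal_def in_keys_iff lookup_minus lookup_restrict_support)

lemma restrict_support_eq_0_iff: "restrict_support F f = 0 \<longleftrightarrow> f \<in> face_ideal F"
proof
  assume "restrict_support F f = 0"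
  then show "f \<in> face_ideal F" using diff_restrict_support_in_face_ideal[of f F] by simp
next
  assume "f \<in> face_ideal F"
  then show "restrict_support F f = 0"
    by (intro poly_mapping_eqI) (auto simp: face_ideal_def support_ideal_def lookup_restrict_support in_keys_iff)
qed

text \<open>Primality: \<open>face_ideal F\<close> is the kernel of the substitution \<open>x\<^sub>v \<mapsto> 0\<close> for \<open>v \<notin> F\<close>, realised
  by \<open>restrict_support F\<close>, which is multiplicative modulo \<open>face_ideal F\<close>.\<close>
lemma is_prime_ideal_face_ideal: "is_prime_ideal (face_ideal F :: ('n::finite, 'k::idom) mpoly set)"
  unfolding is_prime_ideal_def
proof (intro conjI allI impI)
  let ?P = "face_ideal F :: ('n, 'k) mpoly set"
  show I: "is_ideal ?P" by (rule is_ideal_face_ideal)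
  have "1 \<notin> ?P" by (simp add: face_ideal_def support_ideal_def)
  then show "?P \<noteq> UNIV" by blast
  fix a b :: "('n, 'k) mpoly" assume ab: "a * b \<in> ?P"
  let ?a = "restrict_support F a" and ?b = "restrict_support F b"
  have "?a * ?b = a * b - ?a * (b - ?b) - (a - ?a) * b" by (simp add: algebra_simps)
  moreover have "a * b - ?a * (b - ?b) - (a - ?a) * b \<in> ?P"
    by (intro ideal_diff_mem[OF I] ab ideal_mult_left_mem[OF I] ideal_mult_right_mem[OF I]
        diff_restrict_support_in_face_ideal)
  ultimately have "?a * ?b \<in> ?P" by simp
  moreover have "Poly_Mapping.keys \<alpha> \<subseteq> F" if \<alpha>: "\<alpha> \<in> Poly_Mapping.keys (?a * ?b)" for \<alpha>
  proof -
    obtain x y where "\<alpha> = x + y" "x \<in> Poly_Mapping.keys ?a" "y \<in> Poly_Mapping.keys ?b"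
      using subsetD[OF keys_mult \<alpha>] by blast
    then show ?thesis using keys_restrict_support[of x F a] keys_restrict_support[of y F b]
      by (simp add: keys_add_nat)
  qed
  ultimately have "?a * ?b = 0" by (auto simp: face_ideal_def support_ideal_def)
  then have "?a = 0 \<or> ?b = 0" using mpoly_mult_ne_zero by blast
  then show "a \<in> ?P \<or> b \<in> ?P" by (simp add: restrict_support_eq_0_iff)
qed

lemma exists_facet_superset:
  assumes "F \<in> (K :: 'n::finite set set)"
  shows "\<exists>G\<in>facets K. F \<subseteq> G"
proof -
  have "finite K" by (rule finite_subset[of _ "Pow UNIV"]) auto
  from finite_has_maximal2[OF this assms] obtain G
    where "G \<in> K" "F \<subseteq> G" "\<forall>H\<in>K. G \<subseteq> H \<longrightarrow> G = H"
    by blast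
  then show ?thesis unfolding facets_def by blast
qed

lemma stanley_reisner_ideal_subset_face_ideal:
  assumes cl: "\<forall>F\<in>K. \<forall>G. G \<subseteq> F \<longrightarrow> G \<in> K" and F: "F \<in> K"
  shows "stanley_reisner_ideal K \<subseteq> (face_ideal F :: ('n::finite, 'k::comm_ring_1) mpoly set)"
  unfolding stanley_reisner_ideal_def
proof (rule ideal_gen_minimal[OF is_ideal_face_ideal], clarify)
  fix N assume "N \<notin> K"
  then have "\<not> N \<subseteq> F" using cl F by blast
  then show "(\<Prod>v\<in>N. pvar v) \<in> (face_ideal F :: ('n, 'k) mpoly set)"
    by (simp add: prod_pvar face_ideal_def support_ideal_def keys_sqfree_exponent)
qed

text \<open>A prime containing the Stanley--Reisner ideal contains \<open>x\<^sub>v\<close> for all \<open>v\<close> outside some face,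
  namely the face of those \<open>v\<close> with \<open>x\<^sub>v\<close> not in the prime.\<close>
lemma prime_above_stanley_reisner_ideal:
  assumes Q: "is_prime_ideal Q" and sub: "stanley_reisner_ideal K \<subseteq> (Q :: ('n::finite, 'k::comm_ring_1) mpoly set)"
  shows "\<exists>G\<in>facets K. face_ideal G \<subseteq> Q"
proof -
  define F where "F = {v. (pvar v :: ('n, 'k) mpoly) \<notin> Q}"
  have "F \<in> K"
  proof (rule ccontr)
    assume "F \<notin> K"
    then have "(\<Prod>v\<in>F. pvar v :: ('n, 'k) mpoly) \<in> {(\<Prod>v\<in>N. pvar v) | N. N \<notin> K}" by blast
    then have "(\<Prod>v\<in>F. pvar v :: ('n, 'k) mpoly) \<in> Q"
      using sub subset_ideal_gen unfolding stanley_reisner_ideal_def by (meson subsetD)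
    then obtain v where "v \<in> F" "pvar v \<in> Q" using prime_ideal_prod_mem[OF Q finite[of F]] by blast
    then show False by (simp add: F_def)
  qed
  then obtain G where G: "G \<in> facets K" "F \<subseteq> G" using exists_facet_superset by blast
  have "face_ideal F \<subseteq> Q"
  proof (rule face_ideal_subset)
    show "is_ideal Q" using Q by (simp add: is_prime_ideal_def)
    fix v assume "v \<notin> F" then show "pvar v \<in> Q" by (simp add: F_def)
  qed
  moreover have "face_ideal G \<subseteq> (face_ideal F :: ('n, 'k) mpoly set)"
    using G(2) by (simp add: face_ideal_subset_iff)
  ultimately show ?thesis using G(1) by blast
qed

lemma minimal_primes_stanley_reisner_ideal:
  assumes cl: "\<forall>F\<in>K. \<forall>G. G \<subseteq> F \<longrightarrow> G \<in> K"
  shows "minimal_primes (stanley_reisner_ideal K :: ('n::finite, 'k::idom) mpoly set) = face_ideal ` facets K"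
proof (intro equalityI subsetI)
  fix Q :: "('n, 'k) mpoly set" assume "Q \<in> minimal_primes (stanley_reisner_ideal K)"
  then have Q: "is_prime_ideal Q" "stanley_reisner_ideal K \<subseteq> Q"
    and min: "\<And>Q'. is_prime_ideal Q' \<Longrightarrow> stanley_reisner_ideal K \<subseteq> Q' \<Longrightarrow> Q' \<subseteq> Q \<Longrightarrow> Q' = Q"
    unfolding minimal_primes_def by auto
  obtain G where G: "G \<in> facets K" "face_ideal G \<subseteq> Q"
    using prime_above_stanley_reisner_ideal[OF Q] by blast
  then have "G \<in> K" by (simp add: facets_def)
  then have "face_ideal G = Q"
    using min[OF is_prime_ideal_face_ideal stanley_reisner_ideal_subset_face_ideal[OF cl] G(2)] by blast
  then show "Q \<in> face_ideal ` facets K" using G(1) by blast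
next
  fix Q :: "('n, 'k) mpoly set" assume "Q \<in> face_ideal ` facets K"
  then obtain G where G: "G \<in> facets K" "Q = face_ideal G" by blast
  then have "G \<in> K" by (simp add: facets_def)
  have "Q' = Q" if Q': "is_prime_ideal Q'" "stanley_reisner_ideal K \<subseteq> Q'" "Q' \<subseteq> Q" for Q'
  proof -
    obtain G' where G': "G' \<in> facets K" "face_ideal G' \<subseteq> Q'"
      using prime_above_stanley_reisner_ideal[OF Q'(1,2)] by blast
    then have "face_ideal G' \<subseteq> (face_ideal G :: ('n, 'k) mpoly set)" using Q'(3) G(2) by blast
    then have "G \<subseteq> G'" by (simp add: face_ideal_subset_iff)
    then have "G' = G" using G(1) G'(1) unfolding facets_def by blast
    then show ?thesis using G'(2) Q'(3) G(2) by blast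
  qed
  moreover have "is_prime_ideal Q" "stanley_reisner_ideal K \<subseteq> Q"
    using G(2) is_prime_ideal_face_ideal stanley_reisner_ideal_subset_face_ideal[OF cl \<open>G \<in> K\<close>] by simp_all
  ultimately show "Q \<in> minimal_primes (stanley_reisner_ideal K)"
    unfolding minimal_primes_def by blast
qed

lemma ideal_gen_UN_face_ideal:
  "ideal_gen (\<Union>i\<in>S. face_ideal (G i)) = (face_ideal (\<Inter>i\<in>S. G i) :: ('n, 'k::comm_ring_1) mpoly set)"
proof
  show "ideal_gen (\<Union>i\<in>S. face_ideal (G i)) \<subseteq> (face_ideal (\<Inter>i\<in>S. G i) :: ('n, 'k) mpoly set)"
  proof (rule ideal_gen_minimal[OF is_ideal_face_ideal])
    show "(\<Union>i\<in>S. face_ideal (G i)) \<subseteq> (face_ideal (\<Inter>i\<in>S. G i) :: ('n, 'k) mpoly set)"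
      by (intro UN_least) (simp add: face_ideal_subset_iff INT_lower)
  qed
  show "face_ideal (\<Inter>i\<in>S. G i) \<subseteq> (ideal_gen (\<Union>i\<in>S. face_ideal (G i)) :: ('n, 'k) mpoly set)"
  proof (rule face_ideal_subset[OF is_ideal_ideal_gen])
    fix v assume "v \<notin> (\<Inter>i\<in>S. G i)"
    then obtain i where "i \<in> S" "v \<notin> G i" by blast
    then have "(pvar v :: ('n, 'k) mpoly) \<in> (\<Union>i\<in>S. face_ideal (G i))"
      by (auto simp: pvar_in_face_ideal_iff)
    then show "(pvar v :: ('n, 'k) mpoly) \<in> ideal_gen (\<Union>i\<in>S. face_ideal (G i))"
      using subset_ideal_gen by (rule subsetD[rotated])
  qed
qed

lemma irrelevant_ideal_eq_face_ideal: "(irrelevant_ideal :: ('n, 'k::comm_ring_1) mpoly set) = face_ideal {}"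
  by (auto simp: irrelevant_ideal_def face_ideal_def support_ideal_def in_keys_iff)

text \<open>The sum of the minimal primes indexed by \<open>S\<close> is the prime \<open>face_ideal (\<Inter>i\<in>S. G i)\<close>, which is
  the irrelevant ideal exactly when the facets \<open>G i\<close> have no common vertex.\<close>
lemma Delta_complex_eq_nerve:
  assumes "\<forall>i<m. p i = (face_ideal (G i) :: ('n::finite, 'k::idom) mpoly set)"
  shows "Delta_complex m p = nerve G {..<m}"
proof -
  have "radical (ideal_gen (\<Union>i\<in>S. p i)) \<noteq> irrelevant_ideal \<longleftrightarrow> (\<exists>x. \<forall>i\<in>S. x \<in> G i)"
    if "S \<subseteq> {..<m}" for S
  proof -
    have "(\<Union>i\<in>S. p i) = (\<Union>i\<in>S. face_ideal (G i))" using assms that by auto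
    then have "radical (ideal_gen (\<Union>i\<in>S. p i)) = face_ideal (\<Inter>i\<in>S. G i)"
      by (simp add: ideal_gen_UN_face_ideal radical_prime_ideal is_prime_ideal_face_ideal)
    then show ?thesis by (auto simp: irrelevant_ideal_eq_face_ideal face_ideal_eq_iff)
  qed
  then show ?thesis unfolding Delta_complex_def nerve_def by (intro Collect_cong) auto
qed


section \<open>Minimal nonfaces and generators\<close>

lemma stanley_reisner_ideal_subset_support_ideal:
  assumes cl: "\<forall>F\<in>K. \<forall>G. G \<subseteq> F \<longrightarrow> G \<in> K"
  shows "stanley_reisner_ideal K \<subseteq> (support_ideal (\<lambda>S. S \<notin> K) :: ('n::finite, 'k::comm_ring_1) mpoly set)"
proof -
  have I: "is_ideal (support_ideal (\<lambda>S. S \<notin> K) :: ('n, 'k) mpoly set)"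
    by (rule is_ideal_support_ideal) (use cl in blast)
  show ?thesis
    unfolding stanley_reisner_ideal_def
  proof (rule ideal_gen_minimal[OF I], clarify)
    fix N assume "N \<notin> K"
    then show "(\<Prod>v\<in>N. pvar v) \<in> (support_ideal (\<lambda>S. S \<notin> K) :: ('n, 'k) mpoly set)"
      by (simp add: prod_pvar support_ideal_def keys_sqfree_exponent)
  qed
qed

text \<open>For \<open>f\<close> supported on nonfaces and a minimal nonface \<open>N\<close>, the monomial \<open>x\<^sup>N\<close> of \<open>r * f\<close> can
  only arise from \<open>x\<^sup>N\<close> in \<open>f\<close>, since every proper divisor of \<open>x\<^sup>N\<close> is supported on a face.\<close>
lemma lookup_mult_sqfree_exponent:
  fixes r f :: "('n::finite, 'k::comm_ring_1) mpoly"
  assumes cl: "\<forall>F\<in>K. \<forall>G. G \<subseteq> F \<longrightarrow> G \<in> K"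
    and f: "f \<in> support_ideal (\<lambda>S. S \<notin> K)" and N: "N \<in> minimal_nonfaces K UNIV"
  shows "Poly_Mapping.lookup (r * f) (sqfree_exponent N)
    = Poly_Mapping.lookup r 0 * Poly_Mapping.lookup f (sqfree_exponent N)"
proof -
  let ?N = "sqfree_exponent N"
  have key: "x = 0 \<and> y = ?N" if y: "y \<in> Poly_Mapping.keys f" and xy: "?N = x + y" for x y
  proof -
    have yK: "Poly_Mapping.keys y \<notin> K" using f y by (auto simp: support_ideal_def)
    have "Poly_Mapping.keys y \<subseteq> Poly_Mapping.keys ?N" unfolding xy keys_add_nat by blast
    then have yN: "Poly_Mapping.keys y \<subseteq> N" by (simp add: keys_sqfree_exponent)
    have "Poly_Mapping.keys y = N"
    proof (rule ccontr)
      assume "Poly_Mapping.keys y \<noteq> N"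
      then obtain u where "u \<in> N" "Poly_Mapping.keys y \<subseteq> N - {u}" using yN by blast
      then have "Poly_Mapping.keys y \<in> K" using N cl unfolding minimal_nonfaces_def by blast
      then show False using yK by simp
    qed
    then have nz: "Poly_Mapping.lookup y w \<noteq> 0 \<longleftrightarrow> w \<in> N" for w by (metis in_keys_iff)
    have sum: "Poly_Mapping.lookup x w + Poly_Mapping.lookup y w = (if w \<in> N then 1 else 0)" for w
      using arg_cong[OF xy, of "\<lambda>z. Poly_Mapping.lookup z w"] by (simp add: lookup_add lookup_sqfree_exponent)
    have "Poly_Mapping.lookup x w = 0 \<and> Poly_Mapping.lookup y w = Poly_Mapping.lookup ?N w" for w
      using sum[of w] nz[of w] by (cases "w \<in> N") (auto simp: lookup_sqfree_exponent)
    then show ?thesis by (auto intro: poly_mapping_eqI)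
  qed
  have "Poly_Mapping.lookup (r * f) ?N = (\<Sum>x\<in>Poly_Mapping.keys r. \<Sum>y\<in>Poly_Mapping.keys f.
        (if x = 0 \<and> y = ?N then Poly_Mapping.lookup r x * Poly_Mapping.lookup f y else 0))"
    unfolding lookup_mult_keys by (intro sum.cong refl) (use key in auto)
  also have "\<dots> = (\<Sum>x\<in>Poly_Mapping.keys r.
      if x = 0 then Poly_Mapping.lookup r 0 * Poly_Mapping.lookup f ?N else 0)"
  proof (intro sum.cong refl)
    fix x assume "x \<in> Poly_Mapping.keys r"
    show "(\<Sum>y\<in>Poly_Mapping.keys f. (if x = 0 \<and> y = ?N then Poly_Mapping.lookup r x * Poly_Mapping.lookup f y else 0))
      = (if x = 0 then Poly_Mapping.lookup r 0 * Poly_Mapping.lookup f ?N else 0)"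
      by (cases "x = 0") (auto simp: sum.delta' in_keys_iff)
  qed
  also have "\<dots> = Poly_Mapping.lookup r 0 * Poly_Mapping.lookup f ?N"
    by (auto simp: sum.delta' in_keys_iff)
  finally show ?thesis .
qed

interpretation fun_space: vector_space "\<lambda>(c::'k::field) (f::'a \<Rightarrow> 'k) x. c * f x"
  by (simp add: vector_space_def fun_eq_iff algebra_simps)

lemma ideal_gen_image_subset_span:
  fixes \<phi> :: "'a::comm_ring_1 \<Rightarrow> 'b \<Rightarrow> 'k::field"
  assumes add: "\<And>a b. \<phi> (a + b) = \<phi> a + \<phi> b" and zero: "\<phi> 0 = 0"
    and mult: "\<And>r a. a \<in> ideal_gen S \<Longrightarrow> \<phi> (r * a) = (\<lambda>x. c r * \<phi> a x)"
  shows "\<phi> ` ideal_gen S \<subseteq> fun_space.span (\<phi> ` S)"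
proof -
  define J where "J = {a \<in> ideal_gen S. \<phi> a \<in> fun_space.span (\<phi> ` S)}"
  have I: "is_ideal (ideal_gen S)" by (rule is_ideal_ideal_gen)
  have "is_ideal J"
    unfolding is_ideal_def
  proof (intro conjI ballI allI)
    show "0 \<in> J" using I by (simp add: J_def is_ideal_def zero fun_space.span_zero)
    fix a b assume "a \<in> J" "b \<in> J"
    then show "a + b \<in> J" using I by (simp add: J_def is_ideal_def add fun_space.span_add)
  next
    fix r a assume "a \<in> J"
    then show "r * a \<in> J" using I by (simp add: J_def is_ideal_def mult fun_space.span_scale)
  qed
  moreover have "S \<subseteq> J"
    using subset_ideal_gen[of S] by (auto simp: J_def fun_space.span_base)
  ultimately have "ideal_gen S \<subseteq> J" by (rule ideal_gen_minimal)
  then show ?thesis by (auto simp: J_def)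
qed

lemma card_le_length_if_indicators_in_span:
  fixes vs :: "('b \<Rightarrow> 'k::field) list" and M :: "'b set"
  assumes "finite M" and span: "\<And>N. N \<in> M \<Longrightarrow> (\<lambda>N'. if N' = N then 1 else 0) \<in> fun_space.span (set vs)"
  shows "card M \<le> length vs"
proof -
  define \<delta> where "\<delta> N = (\<lambda>N'. if N' = N then (1::'k) else 0)" for N :: 'b
  have indep: "fun_space.independent (\<delta> ` M)"
    unfolding fun_space.dependent_def
  proof
    assume "\<exists>a\<in>\<delta> ` M. a \<in> fun_space.span (\<delta> ` M - {a})"
    then obtain N where N: "N \<in> M" "\<delta> N \<in> fun_space.span (\<delta> ` M - {\<delta> N})" by blast
    have "fun_space.span (\<delta> ` M - {\<delta> N}) \<subseteq> {h. h N = 0}"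
      by (rule fun_space.span_minimal) (auto simp: \<delta>_def fun_space.subspace_def)
    then show False using N(2) by (auto simp: \<delta>_def)
  qed
  have "\<delta> ` M \<subseteq> fun_space.span (set vs)" using span by (auto simp: \<delta>_def)
  from fun_space.independent_span_bound[OF _ indep this]
  have "card (\<delta> ` M) \<le> card (set vs)" by simp
  moreover have "inj_on \<delta> M" unfolding inj_on_def \<delta>_def by (metis zero_neq_one)
  ultimately show ?thesis using card_length[of vs] by (simp add: card_image)
qed

text \<open>The coefficients of the monomials \<open>x\<^sup>N\<close>, \<open>N\<close> a minimal nonface, map the Stanley--Reisner ideal
  into the span of the images of the generators, and \<open>x\<^sup>N\<close> is mapped to the indicator of \<open>N\<close>.\<close>
lemma card_minimal_nonfaces_le_generators:
  fixes gs :: "('n::finite, 'k::field) mpoly list"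
  assumes cl: "\<forall>F\<in>K. \<forall>G. G \<subseteq> F \<longrightarrow> G \<in> K" and gen: "ideal_gen (set gs) = stanley_reisner_ideal K"
  shows "card (minimal_nonfaces K UNIV) \<le> length gs"
proof -
  define M where "M = minimal_nonfaces K (UNIV :: 'n set)"
  define \<psi> where "\<psi> f = (\<lambda>N. if N \<in> M then Poly_Mapping.lookup f (sqfree_exponent N) else (0::'k))"
    for f :: "('n, 'k) mpoly"
  have span: "\<psi> ` stanley_reisner_ideal K \<subseteq> fun_space.span (\<psi> ` set gs)"
    unfolding gen[symmetric]
  proof (rule ideal_gen_image_subset_span)
    fix r a assume "a \<in> ideal_gen (set gs)"
    then have "a \<in> support_ideal (\<lambda>S. S \<notin> K)"
      using stanley_reisner_ideal_subset_support_ideal[OF cl] gen by blast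
    then show "\<psi> (r * a) = (\<lambda>N. Poly_Mapping.lookup r 0 * \<psi> a N)"
      by (intro ext) (simp add: \<psi>_def M_def lookup_mult_sqfree_exponent[OF cl])
  qed (auto simp: \<psi>_def lookup_add fun_eq_iff)
  have "(\<lambda>N'. if N' = N then 1 else 0) \<in> fun_space.span (set (map \<psi> gs))" if N: "N \<in> M" for N
  proof -
    have "(\<Prod>v\<in>N. pvar v :: ('n, 'k) mpoly) \<in> {(\<Prod>v\<in>N. pvar v) | N. N \<notin> K}"
      using N by (auto simp: M_def minimal_nonfaces_def)
    then have "(\<Prod>v\<in>N. pvar v :: ('n, 'k) mpoly) \<in> stanley_reisner_ideal K"
      unfolding stanley_reisner_ideal_def by (meson subsetD subset_ideal_gen)
    moreover have "\<psi> (\<Prod>v\<in>N. pvar v) = (\<lambda>N'. if N' = N then 1 else 0)"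
      using N by (auto simp: \<psi>_def prod_pvar lookup_single when_def fun_eq_iff sqfree_exponent_eq_iff)
    ultimately show ?thesis using span by auto
  qed
  then have "card M \<le> length (map \<psi> gs)"
    by (intro card_le_length_if_indicators_in_span) (auto simp: M_def)
  then show ?thesis by (simp add: M_def)
qed

section \<open>Delta(R/I) as the nerve of the facets\<close>

lemma minimal_primes_enumeration:
  assumes K: "simplicial_complex_on K UNIV"
    and p: "bij_betw p {..<m} (minimal_primes (stanley_reisner_ideal K :: ('n::finite, 'k::idom) mpoly set))"
  obtains G where "\<forall>j<m. p j = (face_ideal (G j) :: ('n, 'k) mpoly set)" "generated_complex G {..<m} UNIV = K"
proof -
  have cl: "\<forall>F\<in>K. \<forall>G. G \<subseteq> F \<longrightarrow> G \<in> K" and "{} \<in> K"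
    using K by (auto simp: simplicial_complex_on_def)
  have img: "p ` {..<m} = face_ideal ` facets K"
    using p minimal_primes_stanley_reisner_ideal[OF cl] by (simp add: bij_betw_def)
  define G where "G j = (SOME F. F \<in> facets K \<and> p j = face_ideal F)" for j
  have G: "G j \<in> facets K \<and> p j = face_ideal (G j)" if "j < m" for j
  proof -
    have "\<exists>F. F \<in> facets K \<and> p j = face_ideal F" using img that by blast
    then show ?thesis unfolding G_def by (rule someI_ex)
  qed
  have onto: "\<exists>j<m. G j = F" if "F \<in> facets K" for F
  proof -
    have "face_ideal F \<in> p ` {..<m}" using img that by blast
    then obtain j where j: "j < m" "p j = face_ideal F" by auto
    then have "face_ideal (G j) = (face_ideal F :: ('n, 'k) mpoly set)" using G[OF j(1)] by simp
    then show ?thesis using j(1) by (auto simp: face_ideal_eq_iff)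
  qed
  have "generated_complex G {..<m} UNIV = K"
  proof (intro equalityI subsetI)
    fix T assume "T \<in> generated_complex G {..<m} UNIV"
    then have "T = {} \<or> (\<exists>j<m. T \<subseteq> G j)" by (auto simp: generated_complex_def)
    then show "T \<in> K"
    proof
      assume "\<exists>j<m. T \<subseteq> G j"
      then obtain j where "j < m" "T \<subseteq> G j" by blast
      moreover have "G j \<in> K" using G[OF \<open>j < m\<close>] by (simp add: facets_def)
      ultimately show ?thesis using cl by blast
    qed (use \<open>{} \<in> K\<close> in simp)
  next
    fix T assume "T \<in> K"
    then obtain F where "F \<in> facets K" "T \<subseteq> F" using exists_facet_superset by blast
    then show "T \<in> generated_complex G {..<m} UNIV"
      using onto by (auto simp: generated_complex_def)
  qed
  then show ?thesis using that G by blast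
qed

theorem corollary3p7:
  fixes K :: "'n::finite set set"
    and t :: nat
    and gs :: "('n, 'k::field) mpoly list"
    and m :: nat
    and p :: "nat \<Rightarrow> ('n, 'k) mpoly set"
  assumes "simplicial_complex_on K UNIV"
    and "t \<le> CARD('n)"
    and "length gs = CARD('n) - t"
    and "ideal_gen (set gs) = (stanley_reisner_ideal K :: ('n, 'k) mpoly set)"
    and "bij_betw p {..<m} (minimal_primes (stanley_reisner_ideal K :: ('n, 'k) mpoly set))"
  shows "\<forall>i. i + 2 \<le> t \<longrightarrow> reduced_homology_vanishes TYPE('k) (Delta_complex m p) i"
proof (intro allI impI)
  fix i assume "i + 2 \<le> t"
  obtain G where G: "\<forall>j<m. p j = face_ideal (G j)" and K: "generated_complex G {..<m} UNIV = K"
    using minimal_primes_enumeration[OF assms(1,5)] by blast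
  have "\<forall>F\<in>K. \<forall>G. G \<subseteq> F \<longrightarrow> G \<in> K"
    using assms(1) by (simp add: simplicial_complex_on_def)
  then have "card (minimal_nonfaces K UNIV) \<le> CARD('n) - t"
    using card_minimal_nonfaces_le_generators[OF _ assms(4)] assms(3) by simp
  then have "i + 1 + 1 + card (minimal_nonfaces (generated_complex G {..<m} UNIV) UNIV) \<le> CARD('n)"
    using K \<open>i + 2 \<le> t\<close> assms(2) by simp
  then have "cycles_are_boundaries TYPE('k) (nerve G {..<m}) (i + 1)"
    using nerve_cycles_are_boundaries[of "UNIV :: 'n set" "{..<m}" G "i + 1"] by simp
  then show "reduced_homology_vanishes TYPE('k) (Delta_complex m p) i"
    unfolding Delta_complex_eq_nerve[OF G] cycles_are_boundaries_def reduced_homology_vanishes_def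
    by simp
qed

end
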